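(* Let $G$ be a finite graph with maximum degree $\Delta \geq 2^{64}$, and let $r=\lceil 400\Delta/\log\Delta\rceil$. Then there exists a partition $V(G)=V_1\uplus\cdots\uplus V_r$ such that for every vertex $v\in V(G)$ and every $i\in[r]$, $|N_G(v)\cap V_i| \leq \frac12\log\Delta$.
   Context: $\log$ denotes the logarithm to base 2; $N_G(v)$ is the set of neighbours of $v$ in $G$; $[r]=\{1,\dots,r\}$. Parts of the partition are allowed to be empty. *)

theory Defs
  imports Complex_Main
begin

definition finite_simple_graph :: "'a set \<Rightarrow> ('a \<Rightarrow> 'a \<Rightarrow> bool) \<Rightarrow> bool" where
  "finite_simple_graph V E \<longleftrightarrow> finite V \<and> (\<forall>u v. E u v \<longrightarrow> u \<in> V \<and> v \<in> V)
     \<and> (\<forall>u v. E u v \<longrightarrow> E v u) \<and> (\<forall>v. \<not> E v v)"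

definition neighbours :: "'a set \<Rightarrow> ('a \<Rightarrow> 'a \<Rightarrow> bool) \<Rightarrow> 'a \<Rightarrow> 'a set" where
  "neighbours V E v = {u \<in> V. E v u}"

definition max_degree :: "'a set \<Rightarrow> ('a \<Rightarrow> 'a \<Rightarrow> bool) \<Rightarrow> nat" where
  "max_degree V E = Max (insert 0 ((\<lambda>v. card (neighbours V E v)) ` V))"

end

theory Submission
  imports Defs "HOL-Probability.Product_PMF"
begin

text \<open>Colour the vertices independently and uniformly with \<open>r\<close> colours, and let
  \<open>m = \<lfloor>log \<Delta> / 2\<rfloor>\<close>. A vertex sees more than \<open>m\<close> neighbours of one colour only if
  some \<open>(m+1)\<close>-subset of its neighbourhood is monochromatic, an event of probability
  \<open>r\<^sup>-\<^sup>m\<close>. Such an event is mutually independent of all events for subsets disjoint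
  from it, and a subset meets at most \<open>(m+1) \<Delta> (\<Delta> choose m+1)\<close> others. For
  \<open>\<Delta> \<ge> 2\<^sup>6\<^sup>4\<close> the choice \<open>r = \<lceil>400 \<Delta> / log \<Delta>\<rceil>\<close> makes the symmetric local lemma
  applicable, so with positive probability no such subset is monochromatic.\<close>

definition avoid_events :: "('i \<Rightarrow> 'b set) \<Rightarrow> 'i set \<Rightarrow> 'b set" where
  "avoid_events ev T = {\<omega>. \<forall>B\<in>T. \<omega> \<notin> ev B}"

lemma avoid_events_antimono: "S \<subseteq> T \<Longrightarrow> avoid_events ev T \<subseteq> avoid_events ev S"
  by (auto simp: avoid_events_def)

text \<open>The symmetric Lovasz local lemma, with \<open>G A\<close> the events \<open>A\<close> may depend on.\<close>

locale symmetric_lll =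
  fixes P :: "'b pmf" and F :: "'i set" and ev :: "'i \<Rightarrow> 'b set"
    and G :: "'i \<Rightarrow> 'i set" and d :: nat and p :: real
  assumes finite_F: "finite F"
    and card_dependent_le: "A \<in> F \<Longrightarrow> card (G A \<inter> F) \<le> d"
    and p_nonneg: "0 \<le> p"
    and lll_condition: "4 * (real d + 1) * p \<le> 1"
    and prob_ev_avoid_independent_le:
      "\<lbrakk>A \<in> F; T \<subseteq> F; T \<inter> G A = {}; A \<notin> T\<rbrakk> \<Longrightarrow>
         measure_pmf.prob P (ev A \<inter> avoid_events ev T) \<le> p * measure_pmf.prob P (avoid_events ev T)"
begin

abbreviation prob :: "'b set \<Rightarrow> real" where
  "prob \<equiv> measure_pmf.prob P"

lemma prob_ev_avoid_le:
  assumes "T \<subseteq> F" "A \<in> F" "A \<notin> T"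
  shows "prob (ev A \<inter> avoid_events ev T) \<le> 2 * p * prob (avoid_events ev T)"
  using assms
proof (induction "card T" arbitrary: A T rule: less_induct)
  case less
  define T1 where "T1 = T \<inter> G A"
  define T2 where "T2 = T - G A"
  have finT: "finite T" using less.prems finite_F finite_subset by blast
  have sub: "avoid_events ev T \<subseteq> avoid_events ev T2"
    by (rule avoid_events_antimono) (auto simp: T2_def)
  \<comment> \<open>Conditioning on the events outside \<open>G A\<close> costs at most a factor 2.\<close>
  have halve: "prob (avoid_events ev T2) \<le> 2 * prob (avoid_events ev T)"
  proof (cases "T1 = {}")
    case True
    then show ?thesis by (simp add: T1_def T2_def Diff_triv Int_commute)
  next
    case False
    have IH: "prob (ev B \<inter> avoid_events ev T2) \<le> 2 * p * prob (avoid_events ev T2)" if "B \<in> T1" for B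
    proof (rule less.hyps)
      show "card T2 < card T"
        using False finT by (auto simp: T1_def T2_def intro!: psubset_card_mono)
    qed (use that less.prems in \<open>auto simp: T1_def T2_def\<close>)
    have "card T1 \<le> card (G A \<inter> F)"
      by (rule card_mono) (use finite_F less.prems in \<open>auto simp: T1_def\<close>)
    with card_dependent_le[OF \<open>A \<in> F\<close>] have "card T1 \<le> d" by simp
    have "prob (avoid_events ev T2) - prob (avoid_events ev T)
          = prob (\<Union>B\<in>T1. ev B \<inter> avoid_events ev T2)"
      using sub by (subst measure_pmf.finite_measure_Diff[symmetric])
        (auto intro!: arg_cong[where f = prob] simp: avoid_events_def T1_def T2_def)
    also have "\<dots> \<le> (\<Sum>B\<in>T1. prob (ev B \<inter> avoid_events ev T2))"
      by (rule measure_pmf.finite_measure_subadditive_finite) (use finT in \<open>auto simp: T1_def\<close>)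
    also have "\<dots> \<le> real (card T1) * (2 * p * prob (avoid_events ev T2))"
      using sum_mono[of T1 _ "\<lambda>_. 2 * p * prob (avoid_events ev T2)"] IH by simp
    also have "\<dots> \<le> real d * (2 * p) * prob (avoid_events ev T2)"
      using \<open>card T1 \<le> d\<close> p_nonneg by (simp add: mult_right_mono)
    also have "\<dots> \<le> 1 / 2 * prob (avoid_events ev T2)"
      using lll_condition p_nonneg by (intro mult_right_mono) (auto simp: algebra_simps)
    finally show ?thesis by simp
  qed
  have "prob (ev A \<inter> avoid_events ev T) \<le> prob (ev A \<inter> avoid_events ev T2)"
    using sub by (intro measure_pmf.finite_measure_mono) auto
  also have "\<dots> \<le> p * prob (avoid_events ev T2)"
    using prob_ev_avoid_independent_le[of A T2] less.prems by (auto simp: T2_def)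
  also have "\<dots> \<le> p * (2 * prob (avoid_events ev T))"
    using halve p_nonneg by (rule mult_left_mono)
  finally show ?case by simp
qed

lemma prob_avoid_pos:
  assumes "T \<subseteq> F"
  shows "prob (avoid_events ev T) > 0"
proof -
  have "finite T" using assms finite_F finite_subset by blast
  then show ?thesis using assms
  proof (induction T rule: finite_induct)
    case empty
    then show ?case by (simp add: avoid_events_def)
  next
    case (insert A T)
    have "avoid_events ev (insert A T) = avoid_events ev T - ev A \<inter> avoid_events ev T"
      by (auto simp: avoid_events_def)
    then have "prob (avoid_events ev (insert A T))
               = prob (avoid_events ev T) - prob (ev A \<inter> avoid_events ev T)"
      by (simp add: measure_pmf.finite_measure_Diff)
    moreover have "prob (ev A \<inter> avoid_events ev T) \<le> 2 * p * prob (avoid_events ev T)"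
      using insert by (intro prob_ev_avoid_le) auto
    moreover have "2 * p * prob (avoid_events ev T) \<le> 1 / 2 * prob (avoid_events ev T)"
      using lll_condition mult_nonneg_nonneg[OF of_nat_0_le_iff p_nonneg, of d]
      by (intro mult_right_mono) (simp_all add: algebra_simps)
    moreover have "prob (avoid_events ev T) > 0" using insert by auto
    ultimately show ?case by linarith
  qed
qed

theorem exists_avoiding_all: "\<exists>\<omega>\<in>set_pmf P. \<forall>B\<in>F. \<omega> \<notin> ev B"
  using prob_avoid_pos[of F] measure_pmf_zero_iff[of P "avoid_events ev F"]
  by (auto simp: avoid_events_def)

end

lemma measure_pair_pmf_Times:
  "measure_pmf.prob (pair_pmf M N) (A \<times> B) = measure_pmf.prob M A * measure_pmf.prob N B"
proof -
  have "(A \<times> B) \<inter> set_pmf (pair_pmf M N) = (A \<inter> set_pmf M) \<times> (B \<inter> set_pmf N)" by auto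
  then have "measure_pmf.prob (pair_pmf M N) (A \<times> B)
             = measure_pmf.prob (pair_pmf M N) ((A \<inter> set_pmf M) \<times> (B \<inter> set_pmf N))"
    by (metis measure_Int_set_pmf)
  also have "\<dots> = measure_pmf.prob M (A \<inter> set_pmf M) * measure_pmf.prob N (B \<inter> set_pmf N)"
    by (rule measure_pmf_prob_product) (auto intro: countable_subset[OF _ countable_set_pmf])
  finally show ?thesis by (simp add: measure_Int_set_pmf)
qed

lemma prob_Pi_pmf_Int_independent_coords:
  assumes "finite V" "S \<subseteq> V"
    and X: "\<And>f g. \<forall>u\<in>S. f u = g u \<Longrightarrow> f \<in> X \<longleftrightarrow> g \<in> X"
    and Y: "\<And>f g. \<forall>u. u \<notin> S \<longrightarrow> f u = g u \<Longrightarrow> f \<in> Y \<longleftrightarrow> g \<in> Y"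
  shows "measure_pmf.prob (Pi_pmf V dflt p) (X \<inter> Y)
         = measure_pmf.prob (Pi_pmf V dflt p) X * measure_pmf.prob (Pi_pmf V dflt p) Y"
proof -
  define glue :: "('a \<Rightarrow> 'b) \<times> ('a \<Rightarrow> 'b) \<Rightarrow> 'a \<Rightarrow> 'b"
    where "glue = (\<lambda>(f, g) x. if x \<in> S then f x else g x)"
  define Q where "Q = pair_pmf (Pi_pmf S dflt p) (Pi_pmf (V - S) dflt p)"
  have "finite S" using assms finite_subset by blast
  have PQ: "Pi_pmf V dflt p = map_pmf glue Q"
  proof -
    have "V = S \<union> (V - S)" using assms(2) by auto
    also have "Pi_pmf (S \<union> (V - S)) dflt p = map_pmf glue Q"
      unfolding Q_def glue_def by (rule Pi_pmf_union) (use assms(1) \<open>finite S\<close> in auto)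
    finally show ?thesis .
  qed
  have "glue (f, g) \<in> X \<longleftrightarrow> f \<in> X" for f g by (rule X) (auto simp: glue_def)
  moreover have "glue (f, g) \<in> Y \<longleftrightarrow> g \<in> Y" for f g by (rule Y) (auto simp: glue_def)
  ultimately have "glue -` (X \<inter> Y) = X \<times> Y" "glue -` X = X \<times> UNIV" "glue -` Y = UNIV \<times> Y"
    by auto
  then show ?thesis by (simp add: PQ measure_map_pmf Q_def measure_pair_pmf_Times)
qed

lemma prob_Pi_pmf_of_set_const_on:
  assumes "finite V" "A \<subseteq> V" "c \<in> C" "finite C"
  shows "measure_pmf.prob (Pi_pmf V dflt (\<lambda>_. pmf_of_set C)) {f. \<forall>u\<in>A. f u = c}
         = (1 / real (card C)) ^ card A"
proof -
  have const_on_eq: "{f. \<forall>u\<in>A. f u = c} = Pi V (\<lambda>u. if u \<in> A then {c} else UNIV)"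
    using assms(2) by (auto simp: Pi_def)
  have "measure_pmf.prob (Pi_pmf V dflt (\<lambda>_. pmf_of_set C)) {f. \<forall>u\<in>A. f u = c}
        = (\<Prod>u\<in>V. measure_pmf.prob (pmf_of_set C) (if u \<in> A then {c} else UNIV))"
    unfolding const_on_eq by (rule measure_Pi_pmf_Pi[OF assms(1)])
  also have "\<dots> = (\<Prod>u\<in>V. if u \<in> A then 1 / real (card C) else 1)"
  proof -
    have "C \<noteq> {}" using assms(3) by blast
    then have "measure_pmf.prob (pmf_of_set C) {c} = 1 / real (card C)"
      using assms(3,4) by (simp add: measure_pmf_of_set)
    then show ?thesis by (intro prod.cong) auto
  qed
  also have "\<dots> = (1 / real (card C)) ^ card (V \<inter> A)"
    by (subst prod.inter_restrict[OF assms(1), symmetric]) simp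
  also have "V \<inter> A = A" using assms(2) by blast
  finally show ?thesis .
qed

definition monochromatic :: "'a set \<Rightarrow> ('a \<Rightarrow> 'c) set" where
  "monochromatic A = {f. \<forall>u\<in>A. \<forall>w\<in>A. f u = f w}"

lemma monochromatic_cong: "\<forall>u\<in>A. f u = g u \<Longrightarrow> f \<in> monochromatic A \<longleftrightarrow> g \<in> monochromatic A"
  unfolding monochromatic_def by (simp cong: ball_cong)

lemma prob_monochromatic_le:
  assumes "finite V" "A \<subseteq> V" "A \<noteq> {}" "finite C" "C \<noteq> {}"
  shows "measure_pmf.prob (Pi_pmf V dflt (\<lambda>_. pmf_of_set C)) (monochromatic A)
         \<le> real (card C) * (1 / real (card C)) ^ card A"
proof -
  let ?P = "Pi_pmf V dflt (\<lambda>_. pmf_of_set C)"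
  obtain a where "a \<in> A" using assms(3) by blast
  have "monochromatic A \<inter> set_pmf ?P \<subseteq> (\<Union>c\<in>C. {f. \<forall>u\<in>A. f u = c})"
  proof
    fix f assume f: "f \<in> monochromatic A \<inter> set_pmf ?P"
    then have "f a \<in> C"
      using \<open>a \<in> A\<close> assms by (auto simp: set_Pi_pmf PiE_dflt_def)
    moreover have "\<forall>u\<in>A. f u = f a" using f \<open>a \<in> A\<close> unfolding monochromatic_def by blast
    ultimately show "f \<in> (\<Union>c\<in>C. {f. \<forall>u\<in>A. f u = c})" by blast
  qed
  then have "measure_pmf.prob ?P (monochromatic A \<inter> set_pmf ?P)
             \<le> measure_pmf.prob ?P (\<Union>c\<in>C. {f. \<forall>u\<in>A. f u = c})"
    by (rule measure_pmf.finite_measure_mono) simp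
  then have "measure_pmf.prob ?P (monochromatic A)
             \<le> measure_pmf.prob ?P (\<Union>c\<in>C. {f. \<forall>u\<in>A. f u = c})"
    by (simp only: measure_Int_set_pmf)
  also have "\<dots> \<le> (\<Sum>c\<in>C. measure_pmf.prob ?P {f. \<forall>u\<in>A. f u = c})"
    by (rule measure_pmf.finite_measure_subadditive_finite) (use assms(4) in auto)
  also have "\<dots> = real (card C) * (1 / real (card C)) ^ card A"
    using prob_Pi_pmf_of_set_const_on[OF assms(1,2) _ assms(4)] by simp
  finally show ?thesis .
qed

definition neighbourhood_subsets :: "'a set \<Rightarrow> ('a \<Rightarrow> 'a \<Rightarrow> bool) \<Rightarrow> nat \<Rightarrow> 'a set set" where
  "neighbourhood_subsets V E k = {S. card S = k \<and> (\<exists>v\<in>V. S \<subseteq> neighbours V E v)}"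

lemma neighbours_subset: "neighbours V E v \<subseteq> V"
  by (auto simp: neighbours_def)

lemma card_neighbourhood_subsets_meeting_le:
  assumes G: "finite_simple_graph V E"
    and deg: "\<And>v. v \<in> V \<Longrightarrow> card (neighbours V E v) \<le> D"
    and "A \<subseteq> V"
  shows "card {S \<in> neighbourhood_subsets V E k. S \<inter> A \<noteq> {}} \<le> card A * D * (D choose k)"
proof -
  have "finite V" using G by (simp add: finite_simple_graph_def)
  then have finN: "finite (neighbours V E w)" for w
    using neighbours_subset finite_subset by metis
  have "finite A" using \<open>finite V\<close> assms(3) finite_subset by blast
  define U where "U w = {S. S \<subseteq> neighbours V E w \<and> card S = k}" for w
  have "finite (U w)" for w
    using finN by (auto simp: U_def intro: finite_subset[of _ "Pow (neighbours V E w)"])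
  have card_U: "card (U w) \<le> D choose k" if "w \<in> V" for w
    unfolding U_def n_subsets[OF finN] using deg[OF that] by (rule binomial_right_mono)
  \<comment> \<open>A subset meeting \<open>A\<close> in \<open>u\<close> lies in the neighbourhood of a neighbour of \<open>u\<close>.\<close>
  have "{S \<in> neighbourhood_subsets V E k. S \<inter> A \<noteq> {}} \<subseteq> (\<Union>u\<in>A. \<Union>w\<in>neighbours V E u. U w)"
    using G by (fastforce simp: neighbourhood_subsets_def U_def neighbours_def finite_simple_graph_def)
  then have "card {S \<in> neighbourhood_subsets V E k. S \<inter> A \<noteq> {}}
             \<le> card (\<Union>u\<in>A. \<Union>w\<in>neighbours V E u. U w)"
    by (rule card_mono[rotated]) (use \<open>finite A\<close> finN \<open>\<And>w. finite (U w)\<close> in auto)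
  also have "\<dots> \<le> (\<Sum>u\<in>A. card (\<Union>w\<in>neighbours V E u. U w))"
    by (rule card_UN_le[OF \<open>finite A\<close>])
  also have "\<dots> \<le> (\<Sum>u\<in>A. \<Sum>w\<in>neighbours V E u. card (U w))"
    by (intro sum_mono card_UN_le[OF finN])
  also have "\<dots> \<le> (\<Sum>u\<in>A. \<Sum>w\<in>neighbours V E u. D choose k)"
    by (intro sum_mono card_U) (auto simp: neighbours_def)
  also have "\<dots> = (\<Sum>u\<in>A. card (neighbours V E u) * (D choose k))"
    by simp
  also have "\<dots> \<le> (\<Sum>u\<in>A. D * (D choose k))"
    by (intro sum_mono mult_right_mono deg) (use assms(3) in auto)
  finally show ?thesis by simp
qed

lemma prob_monochromatic_avoid_le:
  fixes dflt :: nat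
  assumes "finite V" "A \<subseteq> V" "card A = Suc m" "0 < r" "\<forall>B\<in>T. B \<inter> A = {}"
  defines "P \<equiv> Pi_pmf V dflt (\<lambda>_. pmf_of_set {1..r})"
  shows "measure_pmf.prob P (monochromatic A \<inter> avoid_events monochromatic T)
         \<le> 1 / real r ^ m * measure_pmf.prob P (avoid_events monochromatic T)"
proof -
  have "measure_pmf.prob P (monochromatic A \<inter> avoid_events monochromatic T)
        = measure_pmf.prob P (monochromatic A) * measure_pmf.prob P (avoid_events monochromatic T)"
    unfolding P_def using assms(1,2)
  proof (rule prob_Pi_pmf_Int_independent_coords)
    show "f \<in> monochromatic A \<longleftrightarrow> g \<in> monochromatic A" if "\<forall>u\<in>A. f u = g u" for f g
      using that by (rule monochromatic_cong)
    show "f \<in> avoid_events monochromatic T \<longleftrightarrow> g \<in> avoid_events monochromatic T"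
      if fg: "\<forall>u. u \<notin> A \<longrightarrow> f u = g u" for f g
    proof -
      have "f \<in> monochromatic B \<longleftrightarrow> g \<in> monochromatic B" if "B \<in> T" for B
        using that assms(5) fg by (intro monochromatic_cong) blast
      then show ?thesis unfolding avoid_events_def by blast
    qed
  qed
  also have "\<dots> \<le> 1 / real r ^ m * measure_pmf.prob P (avoid_events monochromatic T)"
  proof (rule mult_right_mono)
    have "A \<noteq> {}" using assms(3) by auto
    then have "measure_pmf.prob P (monochromatic A) \<le> real r * (1 / real r) ^ Suc m"
      using prob_monochromatic_le[OF assms(1,2), of "{1..r}"] assms(3,4) by (simp add: P_def)
    then show "measure_pmf.prob P (monochromatic A) \<le> 1 / real r ^ m"
      using assms(4) by (simp add: power_one_over)
  qed simp
  finally show ?thesis .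
qed

lemma card_colour_class_le:
  assumes "\<forall>S\<in>neighbourhood_subsets V E (Suc m). f \<notin> monochromatic S" "v \<in> V"
  shows "card {u \<in> neighbours V E v. f u = i} \<le> m"
proof (rule ccontr)
  assume "\<not> ?thesis"
  then obtain S where "S \<subseteq> {u \<in> neighbours V E v. f u = i}" "card S = Suc m"
    by (metis not_less_eq_eq obtain_subset_with_card_n)
  then have "S \<in> neighbourhood_subsets V E (Suc m)" "f \<in> monochromatic S"
    using assms(2) by (auto simp: neighbourhood_subsets_def monochromatic_def)
  with assms(1) show False by blast
qed

theorem exists_colouring_bounded_colour_degree:
  assumes G: "finite_simple_graph V E"
    and deg: "\<And>v. v \<in> V \<Longrightarrow> card (neighbours V E v) \<le> D"
    and "0 < r"
    and lll: "4 * (real (Suc m * D * (D choose Suc m)) + 1) / real r ^ m \<le> 1"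
  shows "\<exists>f. (\<forall>v\<in>V. f v \<in> {1..r}) \<and> (\<forall>v\<in>V. \<forall>i. card {u \<in> neighbours V E v. f u = i} \<le> m)"
proof -
  have "finite V" using G by (simp add: finite_simple_graph_def)
  define P where "P = Pi_pmf V (0::nat) (\<lambda>_. pmf_of_set {1..r})"
  define F where "F = neighbourhood_subsets V E (Suc m)"
  have F_sub: "A \<subseteq> V" "card A = Suc m" if "A \<in> F" for A
    using that neighbours_subset by (fastforce simp: F_def neighbourhood_subsets_def)+
  interpret symmetric_lll P F monochromatic "\<lambda>A. {S. S \<inter> A \<noteq> {}}"
    "Suc m * D * (D choose Suc m)" "1 / real r ^ m"
  proof
    show "finite F"
      using \<open>finite V\<close> F_sub by (auto intro: finite_subset[of _ "Pow V"])
    show "card ({S. S \<inter> A \<noteq> {}} \<inter> F) \<le> Suc m * D * (D choose Suc m)" if "A \<in> F" for A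
      using card_neighbourhood_subsets_meeting_le[OF G deg F_sub(1)[OF that]] F_sub(2)[OF that]
      by (simp add: F_def Collect_conj_eq Int_commute)
    show "4 * (real (Suc m * D * (D choose Suc m)) + 1) * (1 / real r ^ m) \<le> 1"
      using lll by simp
    show "measure_pmf.prob P (monochromatic A \<inter> avoid_events monochromatic T)
          \<le> 1 / real r ^ m * measure_pmf.prob P (avoid_events monochromatic T)"
      if "A \<in> F" "T \<inter> {S. S \<inter> A \<noteq> {}} = {}" for A T
      unfolding P_def using \<open>finite V\<close> F_sub[OF \<open>A \<in> F\<close>] \<open>0 < r\<close> that(2)
      by (intro prob_monochromatic_avoid_le) blast+
  qed simp
  obtain f where "f \<in> set_pmf P" and "\<forall>S\<in>F. f \<notin> monochromatic S"
    using exists_avoiding_all by blast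
  then show ?thesis
    using \<open>finite V\<close> \<open>0 < r\<close> card_colour_class_le[of V E m f]
    by (auto simp: F_def P_def set_Pi_pmf PiE_dflt_def)
qed

lemma pow_le_exp_mult_fact:
  fixes x :: real
  assumes "0 \<le> x"
  shows "x ^ n \<le> exp x * fact n"
proof -
  have "x ^ n / fact n \<le> (\<Sum>i. x ^ i /\<^sub>R fact i)"
    using sum_le_suminf[OF summable_exp_generic[of x], of "{n}"] assms
    by (simp add: divide_inverse mult.commute)
  then show ?thesis by (simp add: exp_def divide_le_eq mult.commute)
qed

lemma self_pow_le_three_pow_mult_fact: "real k ^ k \<le> 3 ^ k * fact k"
proof -
  have "real k ^ k \<le> exp (real k) * fact k" by (rule pow_le_exp_mult_fact) simp
  also have "exp (real k) = exp 1 ^ k" by (simp add: exp_of_nat_mult[symmetric])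
  also have "exp 1 ^ k \<le> (3::real) ^ k" using exp_le by (intro power_mono) auto
  finally show ?thesis by (simp add: mult_right_mono)
qed

lemma choose_mult_pow_le:
  assumes "real D \<le> 4 ^ Suc m"
  shows "real (Suc m * D * (D choose Suc m)) * real (Suc m) ^ m \<le> 48 ^ Suc m * real D ^ m"
proof -
  have "real ((D choose Suc m) * fact (Suc m)) \<le> real (D ^ Suc m)"
    using binomial_fact_pow by (rule of_nat_mono)
  then have "real (D choose Suc m) * fact (Suc m) \<le> real D ^ Suc m"
    by (simp only: of_nat_mult of_nat_fact of_nat_power)
  then have "real D * real (D choose Suc m) * real (Suc m) ^ Suc m
             \<le> real D * real (D choose Suc m) * (3 ^ Suc m * fact (Suc m))"
    by (intro mult_left_mono self_pow_le_three_pow_mult_fact) simp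
  also have "\<dots> \<le> 3 ^ Suc m * real D * real D ^ Suc m"
    using \<open>real (D choose Suc m) * fact (Suc m) \<le> real D ^ Suc m\<close>
    by (simp add: mult_left_mono mult.assoc mult.left_commute)
  also have "\<dots> = 3 ^ Suc m * (real D * real D) * real D ^ m" by (simp add: algebra_simps)
  also have "\<dots> \<le> 3 ^ Suc m * (4 ^ Suc m * 4 ^ Suc m) * real D ^ m"
    using assms by (intro mult_right_mono mult_left_mono mult_mono) auto
  also have "\<dots> = 48 ^ Suc m * real D ^ m"
    by (simp add: power_mult_distrib[symmetric])
  finally show ?thesis by (simp add: algebra_simps)
qed

lemma four_mult_48_pow_le_200_pow:
  assumes "32 \<le> m"
  shows "4 * 48 ^ Suc m + 4 \<le> (200::real) ^ m"
proof -
  have "(200::nat) \<le> 4 ^ 32" by simp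
  also have "\<dots> \<le> 4 ^ m" using assms by (rule power_increasing) simp
  finally have "48 ^ m * 200 \<le> (48::nat) ^ m * 4 ^ m" by simp
  also have "\<dots> \<le> 200 ^ m" by (simp add: power_mult_distrib[symmetric] power_mono)
  finally have "48 ^ m * 200 \<le> (200::nat) ^ m" .
  moreover have "(1::nat) \<le> 48 ^ m" by simp
  ultimately have "4 * 48 ^ Suc m + 4 \<le> (200::nat) ^ m" by (simp only: power_Suc)
  then have "real (4 * 48 ^ Suc m + 4) \<le> real (200 ^ m)" by (rule of_nat_mono)
  then show ?thesis by simp
qed

lemma lll_condition_numeric:
  fixes D m r :: nat
  assumes "32 \<le> m" "real D \<le> 4 ^ Suc m" "Suc m \<le> D" "200 * real D / real (Suc m) \<le> real r"
  shows "4 * (real (Suc m * D * (D choose Suc m)) + 1) / real r ^ m \<le> 1"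
proof -
  let ?K = "real (Suc m)"
  have "?K ^ m \<le> real D ^ m" using assms(3) by (intro power_mono) auto
  then have "4 * (real (Suc m * D * (D choose Suc m)) + 1) * ?K ^ m
             \<le> (4 * 48 ^ Suc m + 4) * real D ^ m"
    using choose_mult_pow_le[OF assms(2)] by (simp add: algebra_simps)
  also have "\<dots> \<le> 200 ^ m * real D ^ m"
    using four_mult_48_pow_le_200_pow[OF assms(1)] by (simp add: mult_right_mono)
  also have "\<dots> = (200 * real D / ?K) ^ m * ?K ^ m"
    by (simp add: power_divide power_mult_distrib)
  also have "\<dots> \<le> real r ^ m * ?K ^ m"
    using assms(4) by (intro mult_right_mono power_mono) auto
  finally have "4 * (real (Suc m * D * (D choose Suc m)) + 1) \<le> real r ^ m"
    by simp
  then show ?thesis by (simp add: divide_le_eq)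
qed

lemma log_floor_half_bounds:
  fixes x :: real
  assumes "2 ^ 64 \<le> x" and m: "m = nat \<lfloor>log 2 x / 2\<rfloor>"
  shows "32 \<le> m" "real m \<le> log 2 x / 2" "x \<le> 4 ^ Suc m" "real (Suc m) \<le> x"
    "200 * x / real (Suc m) \<le> 400 * x / log 2 x"
proof -
  have "x > 0" using assms(1) by (smt (verit) zero_less_power)
  have "log 2 ((2::real) ^ 64) \<le> log 2 x" using assms(1) by (intro log_mono) auto
  then have "64 \<le> log 2 x" by (subst (asm) log_nat_power) auto
  then have m_eq: "real m = of_int \<lfloor>log 2 x / 2\<rfloor>" using m by simp
  show "32 \<le> m" using \<open>64 \<le> log 2 x\<close> m by (simp add: le_nat_iff le_floor_iff)
  show "real m \<le> log 2 x / 2" using m_eq by linarith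
  have "log 2 x < 2 * real m + 2" using m_eq by linarith
  then have "log 2 x < 2 * real (Suc m)" by simp
  have x_eq: "x = 2 powr log 2 x" using \<open>x > 0\<close> by simp
  have "x \<le> 2 powr (2 * real (Suc m))"
    using \<open>log 2 x < 2 * real (Suc m)\<close> by (subst x_eq) (intro powr_mono, auto)
  also have "\<dots> = 2 powr real (2 * Suc m)" by simp
  also have "\<dots> = 2 ^ (2 * Suc m)" by (rule powr_realpow) simp
  also have "\<dots> = 4 ^ Suc m" by (simp add: power_mult)
  finally show "x \<le> 4 ^ Suc m" .
  have "Suc m \<le> 2 ^ m" by (induction m) auto
  then have "real (Suc m) \<le> 2 ^ m" using of_nat_mono by fastforce
  also have "\<dots> = 2 powr real m" by (simp add: powr_realpow)
  also have "\<dots> \<le> 2 powr log 2 x"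
    using \<open>real m \<le> log 2 x / 2\<close> \<open>64 \<le> log 2 x\<close> by (intro powr_mono) auto
  finally show "real (Suc m) \<le> x" using x_eq by simp
  have "200 * x / real (Suc m) = 400 * x / (2 * real (Suc m))" by (simp add: field_simps)
  also have "\<dots> \<le> 400 * x / log 2 x"
    using \<open>64 \<le> log 2 x\<close> \<open>log 2 x < 2 * real (Suc m)\<close> \<open>x > 0\<close>
    by (intro divide_left_mono mult_pos_pos) linarith+
  finally show "200 * x / real (Suc m) \<le> 400 * x / log 2 x" .
qed

theorem lemma3:
  fixes V :: "'a set" and E :: "'a \<Rightarrow> 'a \<Rightarrow> bool"
  assumes "finite_simple_graph V E"
    and "real (max_degree V E) \<ge> 2 ^ 64"
  shows "\<exists>f :: 'a \<Rightarrow> nat.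
           (\<forall>v\<in>V. f v \<in> {1..nat \<lceil>400 * real (max_degree V E) / log 2 (real (max_degree V E))\<rceil>}) \<and>
           (\<forall>v\<in>V. \<forall>i\<in>{1..nat \<lceil>400 * real (max_degree V E) / log 2 (real (max_degree V E))\<rceil>}.
              real (card {u \<in> neighbours V E v. f u = i}) \<le> log 2 (real (max_degree V E)) / 2)"
proof -
  define D where "D = max_degree V E"
  define L where "L = log 2 (real D)"
  define r where "r = nat \<lceil>400 * real D / L\<rceil>"
  define m where "m = nat \<lfloor>L / 2\<rfloor>"
  have "2 ^ 64 \<le> real D" using assms(2) by (simp add: D_def)
  note bounds = log_floor_half_bounds[OF this m_def[unfolded L_def]]
  have deg: "card (neighbours V E v) \<le> D" if "v \<in> V" for v
    using assms(1) that by (auto simp: D_def max_degree_def finite_simple_graph_def intro!: Max_ge)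
  have "200 * real D / real (Suc m) \<le> 400 * real D / L" using bounds(5) by (simp add: L_def)
  also have "\<dots> \<le> real r" unfolding r_def by (rule real_nat_ceiling_ge)
  finally have r_ge: "200 * real D / real (Suc m) \<le> real r" .
  have "0 < 200 * real D / real (Suc m)" using bounds(4) by simp
  then have "0 < r" using r_ge by linarith
  have "4 * (real (Suc m * D * (D choose Suc m)) + 1) / real r ^ m \<le> 1"
    using bounds(1,3,4) r_ge by (intro lll_condition_numeric) (simp_all only: of_nat_le_iff)
  then obtain f where range: "\<forall>v\<in>V. f v \<in> {1..r}"
      and few: "\<forall>v\<in>V. \<forall>i. card {u \<in> neighbours V E v. f u = i} \<le> m"
    using exists_colouring_bounded_colour_degree[OF assms(1) deg \<open>0 < r\<close>] by blast
  have "real (card {u \<in> neighbours V E v. f u = i}) \<le> L / 2" if "v \<in> V" for v i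
    using few that bounds(2) of_nat_mono[of _ m] unfolding L_def by (meson order_trans)
  then show ?thesis
    unfolding D_def[symmetric] L_def[symmetric] r_def[symmetric] using range by blast
qed

end
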